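(* For $b>0$ define $f_b:[0,1]\to\mathbb{R}$ by $f_b(x)=\dfrac{(b+1)x}{b+\sqrt{1-x^2}}$. Then: (i) $b_1=\dfrac{2}{\pi-2}$ is the largest value of $b>0$ such that $\arcsin x\le f_b(x)$ for all $x\in[0,1]$; (ii) $b_2=2$ is the smallest value of $b>0$ such that $f_b(x)\le \arcsin x$ for all $x\in[0,1]$; (iii) for every $b\in(b_1,2)$ the function $h_b(x)=f_b(x)-\arcsin x$ has a root in the open interval $(0,1)$.
   Context: The functions $f_b$ are exactly the members of the family $\Phi_{a,b}(x)=\frac{ax}{b+\sqrt{1-x^2}}$ ($a,b>0$) satisfying $\Phi_{a,b}(0)=\arcsin 0$ and $\Phi_{a,b}'(0)=\arcsin'(0)$. *)

theory Defs
  imports "HOL-Analysis.Analysis"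
begin

definition f_b :: "real \<Rightarrow> real \<Rightarrow> real" where
  "f_b b x = ((b + 1) * x) / (b + sqrt (1 - x\<^sup>2))"

definition h_b :: "real \<Rightarrow> real \<Rightarrow> real" where
  "h_b b x = f_b b x - arcsin x"

end

theory Submission
  imports Defs "HOL-Real_Asymp.Real_Asymp"
begin

text \<open>Substituting \<open>x = sin t\<close> gives \<open>h_b b (sin t) = g_b b t / (b + cos t)\<close> with
\<open>g_b b t = (b + 1) sin t - t (b + cos t)\<close>, so only the sign of \<open>g_b b\<close> on \<open>[0, pi/2]\<close> matters.
Its derivative is \<open>4 sin (t/2)\<close> times \<open>u cos u - (b/2) sin u\<close> at \<open>u = t/2\<close>, and since
\<open>tan u / u\<close> increases, this factor, once negative, stays negative: \<open>g_b b\<close> first rises and then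
falls. As \<open>g_b b 0 = 0\<close>, it is nonnegative on \<open>[0, pi/2]\<close> exactly when \<open>g_b b (pi/2) \<ge> 0\<close>,
i.e. when \<open>b \<le> 2/(pi - 2)\<close>; this gives (i). For \<open>b \<ge> 2\<close> the factor is never positive, while
for \<open>b < 2\<close> the expansion \<open>g_b b t \<sim> (2 - b) t\<^sup>3 / 6\<close> makes \<open>g_b b\<close> positive near \<open>0\<close>;
this gives (ii). For \<open>b\<close> strictly between the two bounds \<open>h_b b\<close> is positive near \<open>0\<close> and
negative at \<open>1\<close>, and (iii) follows from the intermediate value theorem.\<close>

lemma min_endpoints_le_if_deriv_neg_persists:
  fixes f f' :: "real \<Rightarrow> real"
  assumes deriv: "\<And>s. a \<le> s \<Longrightarrow> s \<le> b \<Longrightarrow> (f has_real_derivative f' s) (at s)"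
    and persists: "\<And>s s'. a \<le> s \<Longrightarrow> s \<le> s' \<Longrightarrow> s' \<le> b \<Longrightarrow> f' s < 0 \<Longrightarrow> f' s' < 0"
    and t: "a \<le> t" "t \<le> b"
  shows "min (f a) (f b) \<le> f t"
proof (cases "f' t < 0")
  case True
  have "f b \<le> f t"
  proof (rule DERIV_nonpos_imp_nonincreasing[OF t(2)])
    fix s assume "t \<le> s" "s \<le> b"
    then have "f' s < 0"
      using persists[OF t(1) _ _ True] by simp
    then show "\<exists>y. (f has_real_derivative y) (at s) \<and> y \<le> 0"
      using deriv \<open>t \<le> s\<close> \<open>s \<le> b\<close> t(1) by (intro exI[of _ "f' s"]) simp
  qed
  then show ?thesis by simp
next
  case False
  have "f a \<le> f t"
  proof (rule DERIV_nonneg_imp_nondecreasing[OF t(1)])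
    fix s assume "a \<le> s" "s \<le> t"
    then have "0 \<le> f' s"
      using persists[of s t] False t(2) by linarith
    then show "\<exists>y. (f has_real_derivative y) (at s) \<and> 0 \<le> y"
      using deriv \<open>a \<le> s\<close> \<open>s \<le> t\<close> t(2) by (intro exI[of _ "f' s"]) simp
  qed
  then show ?thesis by simp
qed

lemma tan_div_mono:
  assumes "0 < u" "u \<le> v" "v < pi/2"
  shows "tan u / u \<le> tan v / v"
proof (rule DERIV_nonneg_imp_nondecreasing[OF assms(2)])
  fix x assume x: "u \<le> x" "x \<le> v"
  have x0: "0 < x" and cos_pos: "0 < cos x"
    using x assms by (auto intro!: cos_gt_zero)
  have "((\<lambda>x. tan x / x) has_real_derivative (x / (cos x)\<^sup>2 - tan x) / x\<^sup>2) (at x)"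
    using x0 cos_pos by (auto intro!: derivative_eq_intros simp: field_simps power2_eq_square)
  moreover have "tan x \<le> x / (cos x)\<^sup>2"
  proof -
    have "sin (2 * x) \<le> 2 * x"
      using x0 by (intro sin_x_le_x) simp
    then have "sin x * cos x \<le> x"
      by (simp add: sin_double)
    then show ?thesis
      using cos_pos by (simp add: tan_def field_simps power2_eq_square)
  qed
  ultimately show "\<exists>y. ((\<lambda>x. tan x / x) has_real_derivative y) (at x) \<and> 0 \<le> y"
    by fastforce
qed

definition g_b :: "real \<Rightarrow> real \<Rightarrow> real" where
  "g_b b t = (b + 1) * sin t - t * (b + cos t)"

definition g_b_deriv_factor :: "real \<Rightarrow> real \<Rightarrow> real" where
  "g_b_deriv_factor b u = u * cos u - b / 2 * sin u"

lemma g_b_zero [simp]: "g_b b 0 = 0"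
  by (simp add: g_b_def)

lemma g_b_pi_half: "g_b b (pi/2) = b + 1 - pi/2 * b"
  by (simp add: g_b_def)

lemma g_b_deriv:
  "(g_b b has_real_derivative 4 * sin (t/2) * g_b_deriv_factor b (t/2)) (at t)"
proof -
  have "(g_b b has_real_derivative t * sin t - b * (1 - cos t)) (at t)"
    unfolding g_b_def[abs_def] by (auto intro!: derivative_eq_intros simp: algebra_simps)
  moreover have "t * sin t - b * (1 - cos t) = 4 * sin (t/2) * g_b_deriv_factor b (t/2)"
  proof -
    have sin_t: "sin t = 2 * sin (t/2) * cos (t/2)" and cos_t: "cos t = 1 - 2 * (sin (t/2))\<^sup>2"
      using sin_double[of "t/2"] cos_double_sin[of "t/2"] by simp_all
    show ?thesis
      unfolding sin_t cos_t by (simp add: g_b_deriv_factor_def algebra_simps power2_eq_square)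
  qed
  ultimately show ?thesis by simp
qed

lemma g_b_deriv_factor_neg_persists:
  assumes "0 < u" "u \<le> v" "v < pi/2" "g_b_deriv_factor b u < 0"
  shows "g_b_deriv_factor b v < 0"
proof -
  have cos_pos: "0 < cos u" "0 < cos v" and "0 < sin u"
    using assms by (auto intro!: cos_gt_zero sin_gt_zero)
  have "u < b / 2 * tan u"
    using assms(4) cos_pos by (simp add: g_b_deriv_factor_def tan_def field_simps)
  moreover have "0 < tan u"
    using \<open>0 < sin u\<close> cos_pos by (simp add: tan_def)
  ultimately have "0 < b / 2 * tan u"
    using assms(1) by linarith
  then have "0 < b"
    using \<open>0 < tan u\<close> by (simp add: zero_less_mult_iff)
  have "2 / b < tan u / u"
    using \<open>u < b / 2 * tan u\<close> \<open>0 < b\<close> assms(1) by (simp add: field_simps)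
  also have "\<dots> \<le> tan v / v"
    by (rule tan_div_mono) (use assms in auto)
  finally have "v < b / 2 * tan v"
    using assms \<open>0 < b\<close> by (simp add: field_simps)
  then show ?thesis
    using cos_pos by (simp add: g_b_deriv_factor_def tan_def field_simps)
qed

lemma g_b_deriv_neg_persists:
  assumes "0 \<le> s" "s \<le> s'" "s' \<le> pi/2"
    and "4 * sin (s/2) * g_b_deriv_factor b (s/2) < 0"
  shows "4 * sin (s'/2) * g_b_deriv_factor b (s'/2) < 0"
proof -
  have "0 \<le> sin (s/2)"
    using assms pi_gt3 by (intro sin_ge_zero) auto
  then have "0 < sin (s/2)" and factor_neg: "g_b_deriv_factor b (s/2) < 0"
    using assms(4) by (auto simp: mult_less_0_iff)
  then have "0 < s"
    using assms(1) by (cases "s = 0") auto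
  have "g_b_deriv_factor b (s'/2) < 0"
    using g_b_deriv_factor_neg_persists[OF _ _ _ factor_neg] \<open>0 < s\<close> assms(2,3) pi_gt3
    by simp
  moreover have "0 < sin (s'/2)"
    using assms \<open>0 < s\<close> pi_gt3 by (intro sin_gt_zero) auto
  ultimately show ?thesis
    by (simp add: mult_pos_neg)
qed

lemma g_b_nonneg:
  assumes "0 \<le> b" "b \<le> 2 / (pi - 2)" "0 \<le> t" "t \<le> pi/2"
  shows "0 \<le> g_b b t"
proof -
  have "0 \<le> g_b b (pi/2)"
    using assms(2) pi_gt3 by (simp add: g_b_pi_half field_simps)
  moreover have "min (g_b b 0) (g_b b (pi/2)) \<le> g_b b t"
    by (rule min_endpoints_le_if_deriv_neg_persists[OF g_b_deriv g_b_deriv_neg_persists])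
      (use assms in auto)
  ultimately show ?thesis by simp
qed

lemma g_b_nonpos:
  assumes "2 \<le> b" "0 \<le> t" "t \<le> pi/2"
  shows "g_b b t \<le> 0"
proof -
  have "g_b b t \<le> g_b b 0"
  proof (rule DERIV_nonpos_imp_nonincreasing[OF assms(2)])
    fix s assume s: "0 \<le> s" "s \<le> t"
    have sin_nonneg: "0 \<le> sin (s/2)"
      using s assms pi_gt3 by (intro sin_ge_zero) auto
    have "s/2 \<le> tan (s/2)"
      using abs_tan_ge[of "s/2"] tan_gt_zero[of "s/2"] s assms pi_gt3 by (cases "s = 0") auto
    moreover have "0 < cos (s/2)"
      using s assms pi_gt3 by (intro cos_gt_zero_pi) auto
    ultimately have "s/2 * cos (s/2) \<le> sin (s/2)"
      by (simp add: tan_def field_simps)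
    then have "g_b_deriv_factor b (s/2) \<le> 0"
      using assms(1) sin_nonneg mult_right_mono[of 1 "b/2" "sin (s/2)"]
      by (simp add: g_b_deriv_factor_def)
    with sin_nonneg show "\<exists>y. (g_b b has_real_derivative y) (at s) \<and> y \<le> 0"
      by (intro exI[of _ "4 * sin (s/2) * g_b_deriv_factor b (s/2)"])
        (simp add: g_b_deriv mult_nonneg_nonpos)
  qed
  then show ?thesis by simp
qed

lemma g_b_pos_near_zero:
  assumes "b < 2"
  shows "\<exists>t\<in>{0<..<pi/2}. 0 < g_b b t"
proof -
  have "eventually (\<lambda>t. 0 < g_b b t) (at_right 0)"
    unfolding g_b_def using assms by real_asymp
  then obtain c where "0 < c" and c: "\<And>t. 0 < t \<Longrightarrow> t < c \<Longrightarrow> 0 < g_b b t"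
    by (auto simp: eventually_at_right_field)
  show ?thesis
    using c[of "min c 1 / 2"] \<open>0 < c\<close> pi_gt3 by (intro bexI[of _ "min c 1 / 2"]) auto
qed

lemma h_b_sin:
  assumes "0 < b" "0 \<le> t" "t \<le> pi/2"
  shows "h_b b (sin t) = g_b b t / (b + cos t)"
proof -
  have "0 \<le> cos t"
    using assms by (intro cos_ge_zero) auto
  then have "sqrt (1 - (sin t)\<^sup>2) = cos t" and "b + cos t \<noteq> 0"
    using assms(1) by (simp_all add: cos_squared_eq[symmetric])
  moreover have "arcsin (sin t) = t"
    using assms pi_gt3 by (intro arcsin_sin) auto
  ultimately show ?thesis
    by (simp add: h_b_def f_b_def g_b_def field_simps)
qed

lemma sgn_h_b:
  assumes "0 < b" "0 \<le> x" "x \<le> 1"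
  shows "sgn (h_b b x) = sgn (g_b b (arcsin x))"
proof -
  have t: "0 \<le> arcsin x" "arcsin x \<le> pi/2"
    using assms arcsin_nonneg arcsin_bounded by auto
  have "0 < b + cos (arcsin x)"
    using assms(1) cos_ge_zero[of "arcsin x"] t by simp
  then show ?thesis
    using h_b_sin[OF assms(1) t] assms by (simp add: sgn_divide)
qed

lemma arcsin_le_f_b:
  assumes "0 < b" "b \<le> 2 / (pi - 2)" "0 \<le> x" "x \<le> 1"
  shows "arcsin x \<le> f_b b x"
proof -
  have "0 \<le> g_b b (arcsin x)"
    using assms arcsin_nonneg arcsin_bounded[of x] by (intro g_b_nonneg) auto
  then have "0 \<le> sgn (h_b b x)"
    using sgn_h_b[OF assms(1,3,4)] by simp
  then show ?thesis
    by (simp add: h_b_def)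
qed

lemma f_b_le_arcsin:
  assumes "2 \<le> b" "0 \<le> x" "x \<le> 1"
  shows "f_b b x \<le> arcsin x"
proof -
  have "g_b b (arcsin x) \<le> 0"
    using assms arcsin_nonneg arcsin_bounded[of x] by (intro g_b_nonpos) auto
  then have "sgn (h_b b x) \<le> 0"
    using sgn_h_b[of b x] assms by simp
  then show ?thesis
    by (simp add: h_b_def)
qed

lemma h_b_pos_near_zero:
  assumes "0 < b" "b < 2"
  shows "\<exists>x\<in>{0<..<1}. 0 < h_b b x"
proof -
  obtain t where t: "0 < t" "t < pi/2" and "0 < g_b b t"
    using g_b_pos_near_zero[OF assms(2)] by auto
  moreover have "0 < cos t"
    using t by (intro cos_gt_zero) auto
  moreover have "0 < sin t"
    using t by (intro sin_gt_zero2)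
  moreover have "sin t < 1"
    using sin_monotone_2pi[of t "pi/2"] t by simp
  ultimately show ?thesis
    using h_b_sin[of b t] assms by (intro bexI[of _ "sin t"]) auto
qed

lemma two_le_if_f_b_le_arcsin:
  assumes "0 < b" and le: "\<forall>x\<in>{0..1}. f_b b x \<le> arcsin x"
  shows "2 \<le> b"
proof (rule ccontr)
  assume "\<not> 2 \<le> b"
  then obtain x where x: "x \<in> {0<..<1}" and "0 < h_b b x"
    using h_b_pos_near_zero assms(1) by fastforce
  moreover have "f_b b x \<le> arcsin x"
    using le x by auto
  ultimately show False
    by (simp add: h_b_def)
qed

lemma h_b_one: "h_b b 1 = (b + 1) / b - pi/2"
  by (simp add: h_b_def f_b_def)

lemma h_b_one_nonneg_iff:
  assumes "0 < b"
  shows "0 \<le> h_b b 1 \<longleftrightarrow> b \<le> 2 / (pi - 2)"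
  using assms pi_gt3 by (simp add: h_b_one field_simps)

lemma le_b1_if_arcsin_le_f_b:
  assumes "0 < b" and le: "\<forall>x\<in>{0..1}. arcsin x \<le> f_b b x"
  shows "b \<le> 2 / (pi - 2)"
  using le[rule_format, of 1] h_b_one_nonneg_iff[OF assms(1)] by (simp add: h_b_def)

lemma continuous_on_h_b:
  assumes "0 < b"
  shows "continuous_on {0..1} (h_b b)"
proof -
  have "b + sqrt (1 - x\<^sup>2) \<noteq> 0" if "x \<in> {0..1}" for x :: real
  proof -
    have "0 \<le> sqrt (1 - x\<^sup>2)"
      using that power_le_one[of x 2] by simp
    then show ?thesis
      using assms by linarith
  qed
  then show ?thesis
    unfolding h_b_def[abs_def] f_b_def by (intro continuous_intros) auto
qed

lemma h_b_root:
  assumes "2 / (pi - 2) < b" "b < 2"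
  shows "\<exists>x\<in>{0<..<1}. h_b b x = 0"
proof -
  have "0 < 2 / (pi - 2)"
    using pi_gt3 by simp
  with assms(1) have "0 < b"
    by linarith
  obtain x0 where x0: "0 < x0" "x0 < 1" "0 < h_b b x0"
    using h_b_pos_near_zero[OF \<open>0 < b\<close> assms(2)] by auto
  have "h_b b 1 < 0"
    using h_b_one_nonneg_iff[OF \<open>0 < b\<close>] assms(1) by linarith
  then obtain x where x: "x0 \<le> x" "x \<le> 1" "h_b b x = 0"
    using IVT2'[of "h_b b" 1 0 x0] x0 continuous_on_subset[OF continuous_on_h_b[OF \<open>0 < b\<close>]]
    by auto
  moreover have "x \<noteq> 1"
    using x(3) \<open>h_b b 1 < 0\<close> by auto
  ultimately show ?thesis
    using x0(1) by (intro bexI[of _ x]) auto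
qed

theorem mainTheorem2:
  shows "(let S = {b::real. b > 0 \<and> (\<forall>x\<in>{0..1}. arcsin x \<le> f_b b x)}
          in 2 / (pi - 2) \<in> S \<and> (\<forall>b\<in>S. b \<le> 2 / (pi - 2)))
       \<and> (let T = {b::real. b > 0 \<and> (\<forall>x\<in>{0..1}. f_b b x \<le> arcsin x)}
          in 2 \<in> T \<and> (\<forall>b\<in>T. 2 \<le> b))
       \<and> (\<forall>b\<in>{2 / (pi - 2)<..<2}. \<exists>x\<in>{0<..<1}. h_b b x = 0)"
proof -
  have b1_pos: "0 < 2 / (pi - 2)"
    using pi_gt3 by simp
  show ?thesis
    unfolding Let_def
  proof (intro conjI ballI CollectI)
    fix x :: real assume "x \<in> {0..1}"
    then show "arcsin x \<le> f_b (2 / (pi - 2)) x"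
      using arcsin_le_f_b[OF b1_pos order_refl] by simp
  next
    fix x :: real assume "x \<in> {0..1}"
    then show "f_b 2 x \<le> arcsin x"
      using f_b_le_arcsin[OF order_refl] by simp
  next
    fix b assume "b \<in> {b. 0 < b \<and> (\<forall>x\<in>{0..1}. arcsin x \<le> f_b b x)}"
    then show "b \<le> 2 / (pi - 2)"
      using le_b1_if_arcsin_le_f_b by blast
  next
    fix b assume "b \<in> {b. 0 < b \<and> (\<forall>x\<in>{0..1}. f_b b x \<le> arcsin x)}"
    then show "2 \<le> b"
      using two_le_if_f_b_le_arcsin by blast
  next
    fix b :: real assume "b \<in> {2 / (pi - 2)<..<2}"
    then show "\<exists>x\<in>{0<..<1}. h_b b x = 0"
      using h_b_root by simp
  qed (use b1_pos in simp_all)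
qed

end
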